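(* Let $n\neq 1$ be a real number, $k_n=n-1$, and $k_0\in\mathbb{R}$. On the phase space with canonical coordinates $(r,\phi,p_r,p_\phi)$, $r>0$, consider $$H_{na}=\tfrac12 r^{2n}\Big(p_r^2+\tfrac{p_\phi^2}{r^2}\Big)+\frac{k_0}{r^{2k_n}}.$$ Let $$P_1=r^n\Big(p_r\cos(k_n\phi)+\tfrac1r p_\phi\sin(k_n\phi)\Big),\qquad P_2=r^n\Big(p_r\sin(k_n\phi)-\tfrac1r p_\phi\cos(k_n\phi)\Big),$$ and define $$J_1=p_\phi,\quad J_{11}=P_1^2+\frac{2k_0}{r^{2k_n}}\cos^2(k_n\phi),\quad J_{22}=P_2^2+\frac{2k_0}{r^{2k_n}}\sin^2(k_n\phi),\quad J_{12}=P_1P_2+\frac{2k_0}{r^{2k_n}}\cos(k_n\phi)\sin(k_n\phi).$$ Then $J_1,J_{11},J_{22},J_{12}$ are constants of motion of $H_{na}$ (they Poisson commute with $H_{na}$), and moreover $dJ_1\wedge dJ_{11}\wedge dJ_{22}\neq 0$, $\{J_{11},J_{22}\}=0$, and $H_{na}=\tfrac12(J_{11}+J_{22})$. In particular $H_{na}$ is superintegrable.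
   Context: The Poisson bracket is the canonical one: $\{F,G\}=\partial_rF\,\partial_{p_r}G-\partial_{p_r}F\,\partial_rG+\partial_\phi F\,\partial_{p_\phi}G-\partial_{p_\phi}F\,\partial_\phi G$. A constant of motion of $H$ is a function $F$ with $\{F,H\}=0$. A two-degree-of-freedom Hamiltonian is superintegrable if it admits two Poisson-commuting integrals and a third functionally independent integral. *)

theory Defs
  imports "HOL-Analysis.Analysis"
begin

text \<open>Phase-space functions in canonical coordinates (r, phi, p_r, p_phi); the phase space is r > 0.\<close>
type_synonym pfun = "real \<Rightarrow> real \<Rightarrow> real \<Rightarrow> real \<Rightarrow> real"

definition d_r :: "pfun \<Rightarrow> pfun" where
  "d_r F r phi pr pphi = deriv (\<lambda>x. F x phi pr pphi) r"
definition d_phi :: "pfun \<Rightarrow> pfun" where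
  "d_phi F r phi pr pphi = deriv (\<lambda>x. F r x pr pphi) phi"
definition d_pr :: "pfun \<Rightarrow> pfun" where
  "d_pr F r phi pr pphi = deriv (\<lambda>x. F r phi x pphi) pr"
definition d_pphi :: "pfun \<Rightarrow> pfun" where
  "d_pphi F r phi pr pphi = deriv (\<lambda>x. F r phi pr x) pphi"

definition poisson :: "pfun \<Rightarrow> pfun \<Rightarrow> pfun" where
  "poisson F G r phi pr pphi =
     d_r F r phi pr pphi * d_pr G r phi pr pphi - d_pr F r phi pr pphi * d_r G r phi pr pphi
   + d_phi F r phi pr pphi * d_pphi G r phi pr pphi - d_pphi F r phi pr pphi * d_phi G r phi pr pphi"

definition smooth_enough :: "pfun \<Rightarrow> bool" where
  "smooth_enough F \<longleftrightarrow> (\<forall>r phi pr pphi. r > 0 \<longrightarrow>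
      (\<lambda>x. F x phi pr pphi) differentiable (at r) \<and>
      (\<lambda>x. F r x pr pphi) differentiable (at phi) \<and>
      (\<lambda>x. F r phi x pphi) differentiable (at pr) \<and>
      (\<lambda>x. F r phi pr x) differentiable (at pphi))"

definition const_of_motion :: "pfun \<Rightarrow> pfun \<Rightarrow> bool" where
  "const_of_motion F H \<longleftrightarrow> (\<forall>r phi pr pphi. r > 0 \<longrightarrow> poisson F H r phi pr pphi = 0)"

definition wedge3_nonzero :: "pfun \<Rightarrow> pfun \<Rightarrow> pfun \<Rightarrow> bool" where
  "wedge3_nonzero F1 F2 F3 \<longleftrightarrow> (\<exists>r phi pr pphi. r > 0 \<and>
     (\<forall>a b c. (\<forall>D \<in> {d_r, d_phi, d_pr, d_pphi}.
          a * D F1 r phi pr pphi + b * D F2 r phi pr pphi + c * D F3 r phi pr pphi = 0)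
        \<longrightarrow> a = 0 \<and> b = 0 \<and> c = 0))"

definition superintegrable :: "pfun \<Rightarrow> bool" where
  "superintegrable H \<longleftrightarrow> (\<exists>F1 F2 F3.
     smooth_enough F1 \<and> smooth_enough F2 \<and> smooth_enough F3 \<and>
     const_of_motion F1 H \<and> const_of_motion F2 H \<and> const_of_motion F3 H \<and>
     (\<forall>r phi pr pphi. r > 0 \<longrightarrow> poisson F1 F2 r phi pr pphi = 0) \<and>
     wedge3_nonzero F1 F2 F3)"

end

theory Submission
  imports Defs
begin

text \<open>In terms of the rotated momenta P1, P2 the Hamiltonian reads
  H = (P1^2 + P2^2)/2 + k0 / r^(2 kn). Everything then rests on {P1, P2} = 0, which holds exactly
  because kn = n - 1, and on the closed form of the brackets of P1, P2 with a potential
  a r^(-2 kn) f(phi). With the Leibniz rule every bracket {J, H} and {J11, J22} reduces to these,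
  and the remaining trigonometric terms cancel by cos^2 + sin^2 = 1. The differentials of J1, J11, J22
  are already independent at the single point (r, phi, p_r, p_phi) = (1, 0, 1, 1).

  Partial derivatives are handled through explicit gradients rather than through deriv, so that the
  Leibniz rule becomes the product rule for gradients and a Poisson bracket becomes the symplectic
  pairing of two gradients.\<close>

type_synonym covector = "real \<times> real \<times> real \<times> real"

definition has_gradient :: "pfun \<Rightarrow> covector \<Rightarrow> real \<Rightarrow> real \<Rightarrow> real \<Rightarrow> real \<Rightarrow> bool" where
  "has_gradient F g r phi pr pphi \<longleftrightarrow>
     ((\<lambda>x. F x phi pr pphi) has_real_derivative fst g) (at r) \<and>
     ((\<lambda>x. F r x pr pphi) has_real_derivative fst (snd g)) (at phi) \<and>
     ((\<lambda>x. F r phi x pphi) has_real_derivative fst (snd (snd g))) (at pr) \<and>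
     ((\<lambda>x. F r phi pr x) has_real_derivative snd (snd (snd g))) (at pphi)"

definition symplectic :: "covector \<Rightarrow> covector \<Rightarrow> real" where
  "symplectic = (\<lambda>(ar, aphi, apr, apphi) (br, bphi, bpr, bpphi).
     ar * bpr - apr * br + aphi * bpphi - apphi * bphi)"

lemma has_gradient_imp_eq:
  assumes "has_gradient F g r phi pr pphi"
  shows "g = (d_r F r phi pr pphi, d_phi F r phi pr pphi, d_pr F r phi pr pphi, d_pphi F r phi pr pphi)"
proof -
  obtain gr gphi gpr gpphi where "g = (gr, gphi, gpr, gpphi)" by (cases g) auto
  with assms show ?thesis
    unfolding has_gradient_def d_r_def d_phi_def d_pr_def d_pphi_def
    by (auto dest!: DERIV_imp_deriv)
qed

lemma poisson_eq_symplectic: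
  assumes "has_gradient F a r phi pr pphi" and "has_gradient G b r phi pr pphi"
  shows "poisson F G r phi pr pphi = symplectic a b"
  by (simp add: has_gradient_imp_eq[OF assms(1)] has_gradient_imp_eq[OF assms(2)]
      poisson_def symplectic_def)

lemma smooth_enough_if_has_gradient:
  assumes "\<And>r phi pr pphi. r > 0 \<Longrightarrow> has_gradient F (g r phi pr pphi) r phi pr pphi"
  shows "smooth_enough F"
  using assms unfolding smooth_enough_def has_gradient_def real_differentiable_def by blast

lemma has_gradient_const: "has_gradient (\<lambda>r phi pr pphi. c) 0 r phi pr pphi"
  unfolding has_gradient_def by simp

lemma has_gradient_momentum_phi: "has_gradient (\<lambda>r phi pr pphi. pphi) (0, 0, 0, 1) r phi pr pphi"
  unfolding has_gradient_def by (auto intro!: derivative_eq_intros)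

lemma has_gradient_add:
  assumes "has_gradient F a r phi pr pphi" and "has_gradient G b r phi pr pphi"
  shows "has_gradient (\<lambda>r phi pr pphi. F r phi pr pphi + G r phi pr pphi) (a + b) r phi pr pphi"
  using assms unfolding has_gradient_def by (auto intro: DERIV_add)

lemma has_gradient_mult:
  assumes "has_gradient F a r phi pr pphi" and "has_gradient G b r phi pr pphi"
  shows "has_gradient (\<lambda>r phi pr pphi. F r phi pr pphi * G r phi pr pphi)
           (F r phi pr pphi *\<^sub>R b + G r phi pr pphi *\<^sub>R a) r phi pr pphi"
  using assms unfolding has_gradient_def
  by (auto intro!: derivative_eq_intros simp: algebra_simps)

lemma has_gradient_power2:
  assumes "has_gradient F a r phi pr pphi"
  shows "has_gradient (\<lambda>r phi pr pphi. (F r phi pr pphi)\<^sup>2) ((2 * F r phi pr pphi) *\<^sub>R a) r phi pr pphi"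
  using has_gradient_mult[OF assms assms] by (simp add: power2_eq_square scaleR_add_left[symmetric])

lemma has_gradient_scale:
  assumes "has_gradient F a r phi pr pphi"
  shows "has_gradient (\<lambda>r phi pr pphi. c * F r phi pr pphi) (c *\<^sub>R a) r phi pr pphi"
  using has_gradient_mult[OF has_gradient_const assms, of c] by simp

lemma has_gradient_cong_pos:
  assumes eq: "\<And>r phi pr pphi. r > 0 \<Longrightarrow> F r phi pr pphi = G r phi pr pphi"
    and r: "r > 0" and F: "has_gradient F g r phi pr pphi"
  shows "has_gradient G g r phi pr pphi"
proof -
  have "((\<lambda>x. F x phi pr pphi) has_real_derivative fst g) (at r)"
    using F unfolding has_gradient_def by blast
  then have "((\<lambda>x. G x phi pr pphi) has_real_derivative fst g) (at r)"
    by (rule has_field_derivative_transform_within_open[where S = "{0<..}"]) (use r eq in auto)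
  moreover have "F r = G r" using eq[OF r] by blast
  ultimately show ?thesis using F unfolding has_gradient_def by simp
qed

lemma has_gradient_radial_angular:
  assumes r: "r > 0" and f: "(f has_real_derivative f') (at phi)"
  shows "has_gradient (\<lambda>r phi pr pphi. a / r powr e * f phi)
           (- e / r * (a / r powr e * f phi), a / r powr e * f', 0, 0) r phi pr pphi"
  unfolding has_gradient_def using r
  by (auto intro!: derivative_eq_intros f simp: powr_diff field_simps)

lemma symplectic_add_left: "symplectic (a + b) c = symplectic a c + symplectic b c"
  and symplectic_add_right: "symplectic a (b + c) = symplectic a b + symplectic a c"
  and symplectic_scaleR_left: "symplectic (x *\<^sub>R a) b = x * symplectic a b"
  and symplectic_scaleR_right: "symplectic a (x *\<^sub>R b) = x * symplectic a b"
  and symplectic_commute: "symplectic b a = - symplectic a b"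
  by (cases a; cases b; cases c; simp add: symplectic_def algebra_simps)+

lemma symplectic_self [simp]: "symplectic a a = 0"
  using symplectic_commute[of a a] by simp

lemma symplectic_configuration: "symplectic (ar, aphi, 0, 0) (br, bphi, 0, 0) = 0"
  by (simp add: symplectic_def)

lemma wedge3_nonzero_if_gradients_independent:
  assumes r: "r > 0"
    and g1: "has_gradient F1 g1 r phi pr pphi" and g2: "has_gradient F2 g2 r phi pr pphi"
    and g3: "has_gradient F3 g3 r phi pr pphi"
    and indep: "\<And>a b c. a *\<^sub>R g1 + b *\<^sub>R g2 + c *\<^sub>R g3 = 0 \<Longrightarrow> a = 0 \<and> b = 0 \<and> c = 0"
  shows "wedge3_nonzero F1 F2 F3"
proof -
  have "a = 0 \<and> b = 0 \<and> c = 0"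
    if "\<forall>D\<in>{d_r, d_phi, d_pr, d_pphi}.
          a * D F1 r phi pr pphi + b * D F2 r phi pr pphi + c * D F3 r phi pr pphi = 0" for a b c
  proof (rule indep)
    show "a *\<^sub>R g1 + b *\<^sub>R g2 + c *\<^sub>R g3 = 0"
      using that by (simp add: has_gradient_imp_eq[OF g1] has_gradient_imp_eq[OF g2]
          has_gradient_imp_eq[OF g3] zero_prod_def)
  qed
  then show ?thesis unfolding wedge3_nonzero_def using r by blast
qed

lemma wedge3_nonzero_rotate:
  assumes "wedge3_nonzero F1 F2 F3"
  shows "wedge3_nonzero F2 F3 F1"
proof -
  obtain r phi pr pphi where r: "r > 0" and indep: "\<And>a b c. \<forall>D\<in>{d_r, d_phi, d_pr, d_pphi}.
      a * D F1 r phi pr pphi + b * D F2 r phi pr pphi + c * D F3 r phi pr pphi = 0 \<Longrightarrow> a = 0 \<and> b = 0 \<and> c = 0"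
    using assms unfolding wedge3_nonzero_def by blast
  have "a = 0 \<and> b = 0 \<and> c = 0"
    if "\<forall>D\<in>{d_r, d_phi, d_pr, d_pphi}.
          a * D F2 r phi pr pphi + b * D F3 r phi pr pphi + c * D F1 r phi pr pphi = 0" for a b c
    using indep[of c a b] that by (simp add: algebra_simps)
  then show ?thesis unfolding wedge3_nonzero_def using r by blast
qed

locale Hna_system =
  fixes n kn k0 :: real
  assumes kn_eq: "kn = n - 1"
begin

definition P1 :: pfun where
  "P1 = (\<lambda>r phi pr pphi. r powr n * (pr * cos (kn*phi) + 1/r * pphi * sin (kn*phi)))"

definition P2 :: pfun where
  "P2 = (\<lambda>r phi pr pphi. r powr n * (pr * sin (kn*phi) - 1/r * pphi * cos (kn*phi)))"

definition H :: pfun where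
  "H = (\<lambda>r phi pr pphi. 1/2 * r powr (2*n) * (pr^2 + pphi^2 / r^2) + k0 / r powr (2*kn))"

definition J11 :: pfun where
  "J11 = (\<lambda>r phi pr pphi. (P1 r phi pr pphi)^2 + 2*k0 / r powr (2*kn) * (cos (kn*phi))^2)"

definition J22 :: pfun where
  "J22 = (\<lambda>r phi pr pphi. (P2 r phi pr pphi)^2 + 2*k0 / r powr (2*kn) * (sin (kn*phi))^2)"

definition J12 :: pfun where
  "J12 = (\<lambda>r phi pr pphi. P1 r phi pr pphi * P2 r phi pr pphi
                          + 2*k0 / r powr (2*kn) * cos (kn*phi) * sin (kn*phi))"

definition grad_P1 :: "real \<Rightarrow> real \<Rightarrow> real \<Rightarrow> real \<Rightarrow> covector" where
  "grad_P1 r phi pr pphi =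
     (n / r * P1 r phi pr pphi - r powr n * pphi * sin (kn*phi) / r^2, - kn * P2 r phi pr pphi,
      r powr n * cos (kn*phi), r powr n * sin (kn*phi) / r)"

definition grad_P2 :: "real \<Rightarrow> real \<Rightarrow> real \<Rightarrow> real \<Rightarrow> covector" where
  "grad_P2 r phi pr pphi =
     (n / r * P2 r phi pr pphi + r powr n * pphi * cos (kn*phi) / r^2, kn * P1 r phi pr pphi,
      r powr n * sin (kn*phi), - (r powr n) * cos (kn*phi) / r)"

text \<open>The gradient of a / r powr (2*kn) * f phi, where v = f phi and v' is the derivative of f at phi.\<close>
definition grad_potential :: "real \<Rightarrow> real \<Rightarrow> real \<Rightarrow> real \<Rightarrow> covector" where
  "grad_potential a v v' r = (- (2*kn) / r * (a / r powr (2*kn) * v), a / r powr (2*kn) * v', 0, 0)"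

lemma has_gradient_P1: "r > 0 \<Longrightarrow> has_gradient P1 (grad_P1 r phi pr pphi) r phi pr pphi"
  unfolding has_gradient_def grad_P1_def P1_def P2_def
  by (intro conjI; (rule derivative_eq_intros refl | force)+; simp add: powr_diff field_simps power2_eq_square)

lemma has_gradient_P2: "r > 0 \<Longrightarrow> has_gradient P2 (grad_P2 r phi pr pphi) r phi pr pphi"
  unfolding has_gradient_def grad_P2_def P1_def P2_def
  by (intro conjI; (rule derivative_eq_intros refl | force)+; simp add: powr_diff field_simps power2_eq_square)

lemma has_gradient_potential:
  "r > 0 \<Longrightarrow> (f has_real_derivative f') (at phi) \<Longrightarrow>
     has_gradient (\<lambda>r phi pr pphi. a / r powr (2*kn) * f phi) (grad_potential a (f phi) f' r) r phi pr pphi"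
  unfolding grad_potential_def by (rule has_gradient_radial_angular)

lemma H_eq_kinetic_plus_potential:
  assumes "r > 0"
  shows "H r phi pr pphi = 1/2 * ((P1 r phi pr pphi)^2 + (P2 r phi pr pphi)^2) + k0 / r powr (2*kn)"
proof -
  have rotation: "(t * (pr * c + u * s))^2 + (t * (pr * s - u * c))^2
      = t^2 * (pr^2 + u^2) * (c^2 + s^2)" for t u c s :: real
    by (simp add: power2_eq_square algebra_simps)
  have "(P1 r phi pr pphi)^2 + (P2 r phi pr pphi)^2
      = (r powr n)^2 * (pr^2 + (1/r * pphi)^2) * ((cos (kn*phi))^2 + (sin (kn*phi))^2)"
    unfolding P1_def P2_def by (rule rotation)
  also have "\<dots> = r powr (2*n) * (pr^2 + pphi^2 / r^2)"
    using assms by (simp add: powr_power mult.commute power_divide)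
  finally show ?thesis unfolding H_def by simp
qed

definition grad_H :: "real \<Rightarrow> real \<Rightarrow> real \<Rightarrow> real \<Rightarrow> covector" where
  "grad_H r phi pr pphi = P1 r phi pr pphi *\<^sub>R grad_P1 r phi pr pphi + P2 r phi pr pphi *\<^sub>R grad_P2 r phi pr pphi
     + grad_potential k0 1 0 r"

lemma has_gradient_H:
  assumes r: "r > 0"
  shows "has_gradient H (grad_H r phi pr pphi) r phi pr pphi"
proof (rule has_gradient_cong_pos[OF _ r])
  \<comment> \<open>the factor 1 is the angular part f = 1 of the potential in has_gradient_potential\<close>
  have "has_gradient (\<lambda>r phi pr pphi. 1/2 * ((P1 r phi pr pphi)^2 + (P2 r phi pr pphi)^2) + k0 / r powr (2*kn) * 1)
          ((1/2) *\<^sub>R ((2 * P1 r phi pr pphi) *\<^sub>R grad_P1 r phi pr pphi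
                       + (2 * P2 r phi pr pphi) *\<^sub>R grad_P2 r phi pr pphi)
           + grad_potential k0 1 0 r) r phi pr pphi"
    by (intro has_gradient_add has_gradient_scale has_gradient_power2 has_gradient_P1 has_gradient_P2
        has_gradient_potential[OF r DERIV_const] r)
  then show "has_gradient (\<lambda>r phi pr pphi. 1/2 * ((P1 r phi pr pphi)^2 + (P2 r phi pr pphi)^2) + k0 / r powr (2*kn) * 1)
          (grad_H r phi pr pphi) r phi pr pphi"
    by (simp add: grad_H_def scaleR_add_right)
qed (simp add: H_eq_kinetic_plus_potential)

lemma has_gradient_J11:
  assumes r: "r > 0"
  shows "has_gradient J11 ((2 * P1 r phi pr pphi) *\<^sub>R grad_P1 r phi pr pphi
           + grad_potential (2*k0) ((cos (kn*phi))^2) (- 2 * kn * cos (kn*phi) * sin (kn*phi)) r) r phi pr pphi"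
proof -
  have "((\<lambda>x. (cos (kn*x))^2) has_real_derivative - 2 * kn * cos (kn*phi) * sin (kn*phi)) (at phi)"
    by (rule derivative_eq_intros refl | simp)+
  from has_gradient_add[OF has_gradient_power2[OF has_gradient_P1[OF r]] has_gradient_potential[OF r this]]
  show ?thesis unfolding J11_def .
qed

lemma has_gradient_J22:
  assumes r: "r > 0"
  shows "has_gradient J22 ((2 * P2 r phi pr pphi) *\<^sub>R grad_P2 r phi pr pphi
           + grad_potential (2*k0) ((sin (kn*phi))^2) (2 * kn * sin (kn*phi) * cos (kn*phi)) r) r phi pr pphi"
proof -
  have "((\<lambda>x. (sin (kn*x))^2) has_real_derivative 2 * kn * sin (kn*phi) * cos (kn*phi)) (at phi)"
    by (rule derivative_eq_intros refl | simp)+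
  from has_gradient_add[OF has_gradient_power2[OF has_gradient_P2[OF r]] has_gradient_potential[OF r this]]
  show ?thesis unfolding J22_def .
qed

lemma has_gradient_J12:
  assumes r: "r > 0"
  shows "has_gradient J12 (P1 r phi pr pphi *\<^sub>R grad_P2 r phi pr pphi + P2 r phi pr pphi *\<^sub>R grad_P1 r phi pr pphi
           + grad_potential (2*k0) (cos (kn*phi) * sin (kn*phi)) (kn * ((cos (kn*phi))^2 - (sin (kn*phi))^2)) r)
           r phi pr pphi"
proof -
  have D: "((\<lambda>x. cos (kn*x) * sin (kn*x)) has_real_derivative kn * ((cos (kn*phi))^2 - (sin (kn*phi))^2)) (at phi)"
    by (rule derivative_eq_intros refl | simp add: power2_eq_square algebra_simps)+
  have J12_eq: "J12 = (\<lambda>r phi pr pphi. P1 r phi pr pphi * P2 r phi pr pphi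
                          + 2*k0 / r powr (2*kn) * (cos (kn*phi) * sin (kn*phi)))"
    unfolding J12_def by (simp add: mult.assoc)
  show ?thesis unfolding J12_eq
    by (rule has_gradient_add[OF has_gradient_mult[OF has_gradient_P1[OF r] has_gradient_P2[OF r]]
        has_gradient_potential[OF r D]])
qed

text \<open>The bracket equals (n - 1 - kn) r^(2n) p_phi / r^2; this is the only place where kn = n - 1 is used.\<close>
lemma symplectic_P1_P2: "r > 0 \<Longrightarrow> symplectic (grad_P1 r phi pr pphi) (grad_P2 r phi pr pphi) = 0"
  unfolding symplectic_def grad_P1_def grad_P2_def P1_def P2_def
  using sin_cos_squared_add[of "kn*phi"]
  by (simp add: kn_eq field_simps power2_eq_square)

lemma symplectic_P1_potential:
  "r > 0 \<Longrightarrow> symplectic (grad_P1 r phi pr pphi) (grad_potential a v v' r)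
     = r powr n * (a / r powr (2*kn)) * (2*kn * cos (kn*phi) * v - sin (kn*phi) * v') / r"
  unfolding symplectic_def grad_P1_def grad_potential_def by (simp add: field_simps)

lemma symplectic_P2_potential:
  "r > 0 \<Longrightarrow> symplectic (grad_P2 r phi pr pphi) (grad_potential a v v' r)
     = r powr n * (a / r powr (2*kn)) * (2*kn * sin (kn*phi) * v + cos (kn*phi) * v') / r"
  unfolding symplectic_def grad_P2_def grad_potential_def by (simp add: field_simps)

lemma symplectic_P2_P1: "r > 0 \<Longrightarrow> symplectic (grad_P2 r phi pr pphi) (grad_P1 r phi pr pphi) = 0"
  using symplectic_P1_P2 symplectic_commute[of "grad_P1 r phi pr pphi" "grad_P2 r phi pr pphi"] by simp

lemma symplectic_potential_P1:
  "r > 0 \<Longrightarrow> symplectic (grad_potential a v v' r) (grad_P1 r phi pr pphi)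
     = - (r powr n * (a / r powr (2*kn)) * (2*kn * cos (kn*phi) * v - sin (kn*phi) * v') / r)"
  using symplectic_P1_potential symplectic_commute[of "grad_P1 r phi pr pphi" "grad_potential a v v' r"]
  by simp

lemma symplectic_potential_P2:
  "r > 0 \<Longrightarrow> symplectic (grad_potential a v v' r) (grad_P2 r phi pr pphi)
     = - (r powr n * (a / r powr (2*kn)) * (2*kn * sin (kn*phi) * v + cos (kn*phi) * v') / r)"
  using symplectic_P2_potential symplectic_commute[of "grad_P2 r phi pr pphi" "grad_potential a v v' r"]
  by simp

lemma symplectic_potential_potential: "symplectic (grad_potential a v v' r) (grad_potential b w w' r) = 0"
  unfolding grad_potential_def by (rule symplectic_configuration)

lemmas symplectic_simps =
  symplectic_add_left symplectic_add_right symplectic_scaleR_left symplectic_scaleR_right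
  symplectic_P1_P2 symplectic_P2_P1 symplectic_P1_potential symplectic_P2_potential
  symplectic_potential_P1 symplectic_potential_P2 symplectic_potential_potential

lemma poisson_J11_H: "r > 0 \<Longrightarrow> poisson J11 H r phi pr pphi = 0"
  by (simp add: poisson_eq_symplectic[OF has_gradient_J11 has_gradient_H] grad_H_def symplectic_simps
      field_simps) (use sin_cos_squared_add3[of "kn*phi"] in algebra)

lemma poisson_J22_H: "r > 0 \<Longrightarrow> poisson J22 H r phi pr pphi = 0"
  by (simp add: poisson_eq_symplectic[OF has_gradient_J22 has_gradient_H] grad_H_def symplectic_simps
      field_simps) (use sin_cos_squared_add3[of "kn*phi"] in algebra)

lemma poisson_J12_H: "r > 0 \<Longrightarrow> poisson J12 H r phi pr pphi = 0"
  by (simp add: poisson_eq_symplectic[OF has_gradient_J12 has_gradient_H] grad_H_def symplectic_simps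
      field_simps) (use sin_cos_squared_add3[of "kn*phi"] in algebra)

lemma poisson_J11_J22: "r > 0 \<Longrightarrow> poisson J11 J22 r phi pr pphi = 0"
  by (simp add: poisson_eq_symplectic[OF has_gradient_J11 has_gradient_J22] symplectic_simps field_simps)
    algebra

lemma poisson_momentum_phi_H: "r > 0 \<Longrightarrow> poisson (\<lambda>r phi pr pphi. pphi) H r phi pr pphi = 0"
  by (simp add: poisson_eq_symplectic[OF has_gradient_momentum_phi has_gradient_H] grad_H_def
      grad_P1_def grad_P2_def grad_potential_def symplectic_def)

lemma H_eq_half_J11_J22:
  assumes "r > 0"
  shows "H r phi pr pphi = 1/2 * (J11 r phi pr pphi + J22 r phi pr pphi)"
proof -
  have "2*k0 / r powr (2*kn) * (cos (kn*phi))^2 + 2*k0 / r powr (2*kn) * (sin (kn*phi))^2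
      = 2*k0 / r powr (2*kn) * ((cos (kn*phi))^2 + (sin (kn*phi))^2)"
    by (simp only: distrib_left)
  also have "\<dots> = 2*k0 / r powr (2*kn)" by simp
  finally show ?thesis
    unfolding H_eq_kinetic_plus_potential[OF assms] J11_def J22_def by (simp add: algebra_simps)
qed

lemma wedge3_nonzero_momentum_phi_J11_J22:
  assumes "kn \<noteq> 0"
  shows "wedge3_nonzero (\<lambda>r phi pr pphi. pphi) J11 J22"
  by (rule wedge3_nonzero_if_gradients_independent[OF zero_less_one has_gradient_momentum_phi
      has_gradient_J11[OF zero_less_one, of 0 1 1] has_gradient_J22[OF zero_less_one, of 0 1 1]])
    (use assms in \<open>simp add: grad_P1_def grad_P2_def grad_potential_def P1_def P2_def zero_prod_def\<close>)

lemma superintegrable_H: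
  assumes "kn \<noteq> 0"
  shows "superintegrable H"
  unfolding superintegrable_def const_of_motion_def
proof (intro exI conjI allI impI)
  show "smooth_enough J11" "smooth_enough J22"
    by (rule smooth_enough_if_has_gradient, erule has_gradient_J11 has_gradient_J22)+
  show "smooth_enough (\<lambda>r phi pr pphi. pphi)"
    by (rule smooth_enough_if_has_gradient, rule has_gradient_momentum_phi)
  show "wedge3_nonzero J11 J22 (\<lambda>r phi pr pphi. pphi)"
    using wedge3_nonzero_rotate[OF wedge3_nonzero_momentum_phi_J11_J22[OF assms]] by simp
qed (simp_all add: poisson_J11_H poisson_J22_H poisson_momentum_phi_H poisson_J11_J22)

end

theorem mainTheorem1:
  fixes n k0 kn :: real and H P1 P2 J1 J11 J22 J12 :: pfun
  assumes hn: "n \<noteq> 1"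
    and hkn: "kn = n - 1"
    and hH: "H = (\<lambda>r phi pr pphi. 1/2 * r powr (2*n) * (pr^2 + pphi^2 / r^2) + k0 / r powr (2*kn))"
    and hP1: "P1 = (\<lambda>r phi pr pphi. r powr n * (pr * cos (kn*phi) + 1/r * pphi * sin (kn*phi)))"
    and hP2: "P2 = (\<lambda>r phi pr pphi. r powr n * (pr * sin (kn*phi) - 1/r * pphi * cos (kn*phi)))"
    and hJ1: "J1 = (\<lambda>r phi pr pphi. pphi)"
    and hJ11: "J11 = (\<lambda>r phi pr pphi. (P1 r phi pr pphi)^2 + 2*k0 / r powr (2*kn) * (cos (kn*phi))^2)"
    and hJ22: "J22 = (\<lambda>r phi pr pphi. (P2 r phi pr pphi)^2 + 2*k0 / r powr (2*kn) * (sin (kn*phi))^2)"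
    and hJ12: "J12 = (\<lambda>r phi pr pphi. P1 r phi pr pphi * P2 r phi pr pphi
                        + 2*k0 / r powr (2*kn) * cos (kn*phi) * sin (kn*phi))"
  shows "const_of_motion J1 H \<and> const_of_motion J11 H \<and> const_of_motion J22 H \<and> const_of_motion J12 H
    \<and> wedge3_nonzero J1 J11 J22
    \<and> (\<forall>r phi pr pphi. r > 0 \<longrightarrow> poisson J11 J22 r phi pr pphi = 0)
    \<and> (\<forall>r phi pr pphi. r > 0 \<longrightarrow> H r phi pr pphi = 1/2 * (J11 r phi pr pphi + J22 r phi pr pphi))
    \<and> superintegrable H"
proof -
  have sys: "Hna_system n kn" unfolding Hna_system_def by (rule hkn)
  have kn: "kn \<noteq> 0" using hn hkn by simp
  have "H = Hna_system.H n kn k0" "J11 = Hna_system.J11 n kn k0" "J22 = Hna_system.J22 n kn k0"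
      "J12 = Hna_system.J12 n kn k0"
    by (simp_all add: hH hJ11 hJ22 hJ12 hP1 hP2 Hna_system.H_def[OF sys] Hna_system.J11_def[OF sys]
        Hna_system.J22_def[OF sys] Hna_system.J12_def[OF sys] Hna_system.P1_def[OF sys]
        Hna_system.P2_def[OF sys])
  then show ?thesis
    unfolding hJ1 const_of_motion_def
    using Hna_system.poisson_momentum_phi_H[OF sys] Hna_system.poisson_J11_H[OF sys]
      Hna_system.poisson_J22_H[OF sys] Hna_system.poisson_J12_H[OF sys]
      Hna_system.poisson_J11_J22[OF sys] Hna_system.H_eq_half_J11_J22[OF sys]
      Hna_system.wedge3_nonzero_momentum_phi_J11_J22[OF sys kn] Hna_system.superintegrable_H[OF sys kn]
    by simp
qed

end
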